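(* Let $G$ be a group generated by a finite set $S$. Assume that every subset of $S$ with (at most) $4$ elements generates a subgroup of exponent $3$. Then $G$ has exponent $3$. *)

theory Defs
  imports "HOL-Algebra.Algebra"
begin

definition exponent3 :: "('a, 'b) monoid_scheme \<Rightarrow> 'a set \<Rightarrow> bool" where
  "exponent3 G H \<longleftrightarrow> (\<forall>h\<in>H. h [^]\<^bsub>G\<^esub> (3::nat) = \<one>\<^bsub>G\<^esub>)"

end

(*
  In a group of exponent 3 every element commutes with all of its conjugates, so the normal
  closure N of an element x is abelian of exponent 3. On N the map u |-> [u, g] acts as g - 1,
  and the identity [u, g, g] = 1 says (g - 1)^2 = 0; linearising it (Levi, van der Waerden)
  gives [x, g, h, k] = 1, i.e. groups of exponent 3 are nilpotent of class at most 3.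

  Inside the subgroups generated by at most four generators this yields a^3 = 1,
  [a, b, c, d] = 1, [a, b, b] = [a, bc, bc] = 1 and [a, b, c]^3 = 1 for a, b, c, d in S.
  Commutator calculus spreads these relations from S to all of G: every [x, y, z] is central,
  multiplicative in each argument, alternating in y and z, and of order dividing 3, hence
  [x, y, y] = 1. So [x, y] commutes with x and y, (x y)^3 = x^3 y^3 [y, x]^3, and induction
  on words gives g^3 = 1.
*)

theory Submission
  imports Defs
begin

section \<open>Commutators and conjugates\<close>

definition commutator :: "('a, 'b) monoid_scheme \<Rightarrow> 'a \<Rightarrow> 'a \<Rightarrow> 'a"
    (\<open>\<lbrace>_, _\<rbrace>\<index>\<close>)
  where "\<lbrace>a, b\<rbrace>\<^bsub>G\<^esub> = inv\<^bsub>G\<^esub> a \<otimes>\<^bsub>G\<^esub> inv\<^bsub>G\<^esub> b \<otimes>\<^bsub>G\<^esub> a \<otimes>\<^bsub>G\<^esub> b"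

definition conjugates :: "('a, 'b) monoid_scheme \<Rightarrow> 'a \<Rightarrow> 'a set"
  where "conjugates G x = (\<lambda>g. inv\<^bsub>G\<^esub> g \<otimes>\<^bsub>G\<^esub> x \<otimes>\<^bsub>G\<^esub> g) ` carrier G"

context group
begin

lemma mult_inv_cancel_left [simp]:
  "a \<in> carrier G \<Longrightarrow> r \<in> carrier G \<Longrightarrow> a \<otimes> (inv a \<otimes> r) = r"
  by (simp add: m_assoc[symmetric])

lemma inv_mult_cancel_left [simp]:
  "a \<in> carrier G \<Longrightarrow> r \<in> carrier G \<Longrightarrow> inv a \<otimes> (a \<otimes> r) = r"
  by (simp add: m_assoc[symmetric])

lemma commutator_closed [simp]:
  "a \<in> carrier G \<Longrightarrow> b \<in> carrier G \<Longrightarrow> \<lbrace>a, b\<rbrace> \<in> carrier G"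
  by (simp add: commutator_def)

lemma commutator_one_left [simp]: "b \<in> carrier G \<Longrightarrow> \<lbrace>\<one>, b\<rbrace> = \<one>"
  by (simp add: commutator_def)

lemma commutator_one_right [simp]: "a \<in> carrier G \<Longrightarrow> \<lbrace>a, \<one>\<rbrace> = \<one>"
  by (simp add: commutator_def)

lemma commutator_self [simp]: "a \<in> carrier G \<Longrightarrow> \<lbrace>a, a\<rbrace> = \<one>"
  by (simp add: commutator_def m_assoc)

lemma commutator_eq_one_iff:
  assumes "a \<in> carrier G" "b \<in> carrier G"
  shows "\<lbrace>a, b\<rbrace> = \<one> \<longleftrightarrow> a \<otimes> b = b \<otimes> a"
proof -
  have "\<lbrace>a, b\<rbrace> = inv (b \<otimes> a) \<otimes> (a \<otimes> b)"
    using assms by (simp add: commutator_def inv_mult_group m_assoc)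
  then show ?thesis
    using assms by (simp add: inv_solve_left' eq_commute[of "a \<otimes> b"])
qed

lemma conj_eq_mult_commutator:
  "u \<in> carrier G \<Longrightarrow> g \<in> carrier G \<Longrightarrow> inv g \<otimes> u \<otimes> g = u \<otimes> \<lbrace>u, g\<rbrace>"
  by (simp add: commutator_def m_assoc[symmetric])

lemma commutator_mult_left:
  assumes "u \<in> carrier G" "v \<in> carrier G" "g \<in> carrier G"
  shows "\<lbrace>u \<otimes> v, g\<rbrace> = inv v \<otimes> \<lbrace>u, g\<rbrace> \<otimes> v \<otimes> \<lbrace>v, g\<rbrace>"
  using assms by (simp add: commutator_def inv_mult_group m_assoc)

lemma commutator_mult_right:
  assumes "u \<in> carrier G" "g \<in> carrier G" "h \<in> carrier G"
  shows "\<lbrace>u, g \<otimes> h\<rbrace> = \<lbrace>u, h\<rbrace> \<otimes> \<lbrace>u, g\<rbrace> \<otimes> \<lbrace>\<lbrace>u, g\<rbrace>, h\<rbrace>"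
proof -
  have "\<lbrace>u, g \<otimes> h\<rbrace> = \<lbrace>u, h\<rbrace> \<otimes> (inv h \<otimes> \<lbrace>u, g\<rbrace> \<otimes> h)"
    using assms by (simp add: commutator_def inv_mult_group m_assoc)
  then show ?thesis
    using assms conj_eq_mult_commutator[of "\<lbrace>u, g\<rbrace>" h] by (simp add: m_assoc)
qed

lemma commute_inv:
  assumes "a \<in> carrier G" "b \<in> carrier G" "a \<otimes> b = b \<otimes> a"
  shows "a \<otimes> inv b = inv b \<otimes> a"
proof -
  have "inv b \<otimes> a = inv b \<otimes> (a \<otimes> b) \<otimes> inv b"
    using assms(1,2) by (simp add: m_assoc)
  also have "\<dots> = inv b \<otimes> (b \<otimes> a) \<otimes> inv b"
    using assms(3) by simp
  also have "\<dots> = a \<otimes> inv b"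
    using assms by (simp add: m_assoc)
  finally show ?thesis by (rule sym)
qed

lemma generate_commute:
  assumes "a \<in> carrier G" "A \<subseteq> carrier G" "\<And>x. x \<in> A \<Longrightarrow> a \<otimes> x = x \<otimes> a"
    and "b \<in> generate G A"
  shows "a \<otimes> b = b \<otimes> a"
  using assms(4)
proof (induction rule: generate.induct)
  case one
  then show ?case using assms(1) by simp
next
  case (incl h)
  then show ?case using assms(3) by blast
next
  case (inv h)
  then show ?case using assms(2,3) commute_inv[OF assms(1)] by blast
next
  case (eng h1 h2)
  have "h1 \<in> carrier G" "h2 \<in> carrier G"
    using eng.hyps assms(2) generate_in_carrier by auto
  then have "a \<otimes> (h1 \<otimes> h2) = h1 \<otimes> (a \<otimes> h2)"
    using eng.IH(1) assms(1) by (simp add: m_assoc[symmetric])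
  then show ?case
    using eng.IH(2) assms(1) \<open>h1 \<in> carrier G\<close> \<open>h2 \<in> carrier G\<close> by (simp add: m_assoc)
qed

lemma generate_abelian:
  assumes "A \<subseteq> carrier G" "\<And>a b. a \<in> A \<Longrightarrow> b \<in> A \<Longrightarrow> a \<otimes> b = b \<otimes> a"
    and "u \<in> generate G A" "v \<in> generate G A"
  shows "u \<otimes> v = v \<otimes> u"
proof -
  have "a \<otimes> v = v \<otimes> a" if "a \<in> A" for a
    using generate_commute[of a A v] that assms by auto
  then show ?thesis
    using generate_commute[of v A u] assms generate_in_carrier[OF assms(1,4)] by auto
qed

lemma generate_conjugates_normal:
  assumes x: "x \<in> carrier G"
  shows "generate G (conjugates G x) \<lhd> G"
proof (rule normal_generateI)
  show "conjugates G x \<subseteq> carrier G"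
    using x by (auto simp: conjugates_def)
next
  fix c g assume "c \<in> conjugates G x" and g: "g \<in> carrier G"
  then obtain a where a: "a \<in> carrier G" "c = inv a \<otimes> x \<otimes> a"
    by (auto simp: conjugates_def)
  then have "g \<otimes> c \<otimes> inv g = inv (a \<otimes> inv g) \<otimes> x \<otimes> (a \<otimes> inv g)"
    using x g by (simp add: inv_mult_group m_assoc)
  then show "g \<otimes> c \<otimes> inv g \<in> conjugates G x"
    using a g by (auto simp: conjugates_def)
qed

lemma cube_mult_commute:
  assumes "a \<in> carrier G" "b \<in> carrier G" "a \<otimes> b = b \<otimes> a"
  shows "(a \<otimes> b) \<otimes> (a \<otimes> b) \<otimes> (a \<otimes> b) = (a \<otimes> a \<otimes> a) \<otimes> (b \<otimes> b \<otimes> b)"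
  using pow_mult_distrib[of a b 3] assms by (simp add: numeral_3_eq_3)

lemma cube_mult_eq_one:
  assumes x: "x \<in> carrier G" and y: "y \<in> carrier G"
    and x3: "x \<otimes> x \<otimes> x = \<one>" and y3: "y \<otimes> y \<otimes> y = \<one>"
    and engel_x: "\<lbrace>\<lbrace>x, y\<rbrace>, x\<rbrace> = \<one>" and engel_y: "\<lbrace>\<lbrace>x, y\<rbrace>, y\<rbrace> = \<one>"
  shows "(x \<otimes> y) \<otimes> (x \<otimes> y) \<otimes> (x \<otimes> y) = \<one>"
proof -
  define c where "c = \<lbrace>x, y\<rbrace>"
  define e where "e = inv c"
  have c: "c \<in> carrier G" and e: "e \<in> carrier G"
    using x y by (simp_all add: c_def e_def)
  have cx: "c \<otimes> x = x \<otimes> c" and cy: "c \<otimes> y = y \<otimes> c"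
    using engel_x engel_y x y c by (simp_all add: c_def commutator_eq_one_iff)
  \<comment> \<open>x \<otimes> c is a conjugate of x and c commutes with x, so c has cube 1 as well\<close>
  have "(x \<otimes> c) \<otimes> (x \<otimes> c) \<otimes> (x \<otimes> c) = inv y \<otimes> (x \<otimes> x \<otimes> x) \<otimes> y"
    using x y by (simp add: c_def conj_eq_mult_commutator[symmetric] m_assoc)
  moreover have "(x \<otimes> c) \<otimes> (x \<otimes> c) \<otimes> (x \<otimes> c) = (x \<otimes> x \<otimes> x) \<otimes> (c \<otimes> c \<otimes> c)"
    using x c cx by (simp add: cube_mult_commute)
  ultimately have "c \<otimes> c \<otimes> c = \<one>"
    using x y c x3 by simp
  then have e3: "e \<otimes> (e \<otimes> e) = \<one>"
    using c by (simp add: e_def inv_mult_group[symmetric] m_assoc)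
  have ex: "e \<otimes> x = x \<otimes> e" and ey: "e \<otimes> y = y \<otimes> e"
    using commute_inv[of x c] commute_inv[of y c] x y c cx cy by (simp_all add: e_def)
  have ex': "e \<otimes> (x \<otimes> r) = x \<otimes> (e \<otimes> r)" and ey': "e \<otimes> (y \<otimes> r) = y \<otimes> (e \<otimes> r)"
    if "r \<in> carrier G" for r
    using x y e that ex ey by (simp_all add: m_assoc[symmetric])
  have yx: "y \<otimes> x = x \<otimes> (y \<otimes> e)"
    using x y by (simp add: e_def c_def commutator_def inv_mult_group m_assoc)
  have yx': "y \<otimes> (x \<otimes> r) = x \<otimes> (y \<otimes> (e \<otimes> r))" if "r \<in> carrier G" for r
    using x y e that yx by (simp add: m_assoc[symmetric])
  have "(x \<otimes> y) \<otimes> (x \<otimes> y) \<otimes> (x \<otimes> y) = (x \<otimes> (x \<otimes> x)) \<otimes> ((y \<otimes> (y \<otimes> y)) \<otimes> (e \<otimes> (e \<otimes> e)))"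
    using x y e by (simp add: m_assoc yx yx' ex ex' ey ey')
  then show ?thesis
    using x y x3 y3 e3 by (simp add: m_assoc)
qed

lemma subgroup_commutator_closed:
  "subgroup H G \<Longrightarrow> a \<in> H \<Longrightarrow> b \<in> H \<Longrightarrow> \<lbrace>a, b\<rbrace> \<in> H"
  by (simp add: commutator_def subgroup.m_closed subgroup.m_inv_closed)

lemma commutator_subgroup:
  "subgroup H G \<Longrightarrow> a \<in> H \<Longrightarrow> b \<in> H \<Longrightarrow> \<lbrace>a, b\<rbrace>\<^bsub>G\<lparr>carrier := H\<rparr>\<^esub> = \<lbrace>a, b\<rbrace>"
  by (simp add: commutator_def)

end

section \<open>Groups of exponent 3 are nilpotent of class at most 3\<close>

locale exp3_group = group G for G (structure) +
  assumes exponent3: "exponent3 G (carrier G)"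
begin

lemma cube: "x \<in> carrier G \<Longrightarrow> x \<otimes> x \<otimes> x = \<one>"
  using exponent3 by (simp add: exponent3_def numeral_3_eq_3)

lemma inv_eq_square: "x \<in> carrier G \<Longrightarrow> inv x = x \<otimes> x"
  using cube by (intro inv_equality) auto

lemma square_eq_inv: "x \<in> carrier G \<Longrightarrow> x \<otimes> x = inv x"
  by (simp add: inv_eq_square)

lemma square_eq_inv_assoc: "x \<in> carrier G \<Longrightarrow> r \<in> carrier G \<Longrightarrow> x \<otimes> (x \<otimes> r) = inv x \<otimes> r"
  by (simp add: inv_eq_square m_assoc)

lemma inv_square: "x \<in> carrier G \<Longrightarrow> inv x \<otimes> inv x = x"
  by (metis inv_closed inv_eq_square inv_inv)

lemma inv_square_assoc: "x \<in> carrier G \<Longrightarrow> r \<in> carrier G \<Longrightarrow> inv x \<otimes> (inv x \<otimes> r) = x \<otimes> r"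
  by (simp add: inv_square m_assoc[symmetric])

lemmas square_simps = square_eq_inv square_eq_inv_assoc inv_square inv_square_assoc

lemma inv_eq_self_imp_eq_one:
  assumes "x \<in> carrier G" "inv x = x"
  shows "x = \<one>"
proof -
  have "x \<otimes> x = x \<otimes> \<one>"
    using assms by (simp add: inv_eq_square[symmetric])
  then show ?thesis
    using assms(1) by simp
qed

lemma mult_conj_commute:
  assumes x: "x \<in> carrier G" and y: "y \<in> carrier G"
  shows "x \<otimes> (inv y \<otimes> x \<otimes> y) = (inv y \<otimes> x \<otimes> y) \<otimes> x"
proof -
  have aba: "a \<otimes> b \<otimes> a = inv b \<otimes> inv a \<otimes> inv b"
    if a: "a \<in> carrier G" and b: "b \<in> carrier G" for a b
  proof -
    have "(a \<otimes> b \<otimes> a) \<otimes> (b \<otimes> a \<otimes> b) = \<one>"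
      using cube[of "a \<otimes> b"] a b by (simp add: m_assoc)
    then have "a \<otimes> b \<otimes> a = inv (b \<otimes> a \<otimes> b)"
      using a b by (simp add: inv_equality[symmetric] inv_comm)
    then show ?thesis
      using a b by (simp add: inv_mult_group m_assoc)
  qed
  have "x \<otimes> (inv y \<otimes> x \<otimes> y) = (x \<otimes> inv y \<otimes> x) \<otimes> y"
    using x y by (simp add: m_assoc)
  also have "\<dots> = y \<otimes> inv x \<otimes> inv y"
    using aba[of x "inv y"] x y by (simp add: m_assoc square_simps)
  also have "\<dots> = inv y \<otimes> (inv y \<otimes> inv x \<otimes> inv y)"
    using x y by (simp add: m_assoc square_simps)
  also have "\<dots> = (inv y \<otimes> x \<otimes> y) \<otimes> x"
    using aba[of x y] x y by (simp add: m_assoc)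
  finally show ?thesis .
qed

lemma conjugates_commute:
  assumes x: "x \<in> carrier G" and "a \<in> conjugates G x" "b \<in> conjugates G x"
  shows "a \<otimes> b = b \<otimes> a"
proof -
  obtain g h where g: "g \<in> carrier G" "a = inv g \<otimes> x \<otimes> g"
    and h: "h \<in> carrier G" "b = inv h \<otimes> x \<otimes> h"
    using assms(2,3) by (auto simp: conjugates_def)
  define k where "k = h \<otimes> inv g"
  have k: "k \<in> carrier G" and h_eq: "h = k \<otimes> g"
    using g h by (simp_all add: k_def m_assoc)
  have "a \<otimes> b = inv g \<otimes> (x \<otimes> (inv k \<otimes> x \<otimes> k)) \<otimes> g"
    using x g h k by (simp add: h_eq inv_mult_group m_assoc)
  also have "\<dots> = inv g \<otimes> ((inv k \<otimes> x \<otimes> k) \<otimes> x) \<otimes> g"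
    using mult_conj_commute[OF x k] by simp
  also have "\<dots> = b \<otimes> a"
    using x g h k by (simp add: h_eq inv_mult_group m_assoc)
  finally show ?thesis .
qed

lemma engel [simp]:
  assumes u: "u \<in> carrier G" and g: "g \<in> carrier G"
  shows "\<lbrace>\<lbrace>u, g\<rbrace>, g\<rbrace> = \<one>"
proof -
  define c where "c = inv u \<otimes> inv g \<otimes> u"
  have c: "c \<in> carrier G" using u g by (simp add: c_def)
  have "inv g \<otimes> c = c \<otimes> inv g"
    using mult_conj_commute[of "inv g" u] u g by (simp add: c_def)
  then have cg: "c \<otimes> g = g \<otimes> c"
    using commute_inv[of c "inv g"] c g by simp
  have "\<lbrace>u, g\<rbrace> = c \<otimes> g" by (simp add: commutator_def c_def)
  then have "\<lbrace>u, g\<rbrace> \<otimes> g = g \<otimes> \<lbrace>u, g\<rbrace>"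
    using c g cg by (simp add: m_assoc)
  then show ?thesis using u g by (simp add: commutator_eq_one_iff)
qed

lemma commutator_inv_right:
  assumes u: "u \<in> carrier G" and g: "g \<in> carrier G"
  shows "\<lbrace>u, inv g\<rbrace> = inv \<lbrace>u, g\<rbrace>"
proof -
  have "\<lbrace>u, g\<rbrace> \<otimes> g = g \<otimes> \<lbrace>u, g\<rbrace>"
    using commutator_eq_one_iff[of "\<lbrace>u, g\<rbrace>" g] u g by simp
  then have "g \<otimes> inv \<lbrace>u, g\<rbrace> = inv \<lbrace>u, g\<rbrace> \<otimes> g"
    using commute_inv[of g "\<lbrace>u, g\<rbrace>"] u g by simp
  moreover have "\<lbrace>u, inv g\<rbrace> = g \<otimes> inv \<lbrace>u, g\<rbrace> \<otimes> inv g"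
    using u g by (simp add: commutator_def inv_mult_group m_assoc)
  ultimately show ?thesis
    using u g by (simp add: m_assoc)
qed

end

(* Written additively, N is a module over the group ring of G with coefficients mod 3, on which
   u |-> [u, g] acts as g - 1. Engel's identity says (g - 1)^2 = 0; the lemmas below linearise it. *)
locale exp3_abelian_normal = exp3_group +
  fixes N
  assumes normal: "N \<lhd> G"
    and abelian: "u \<in> N \<Longrightarrow> v \<in> N \<Longrightarrow> u \<otimes> v = v \<otimes> u"
begin

lemma N_subgroup: "subgroup N G"
  using normal by (rule normal_imp_subgroup)

lemma N_carrier [simp]: "u \<in> N \<Longrightarrow> u \<in> carrier G"
  by (rule subgroup.mem_carrier[OF N_subgroup])

lemma N_m_closed [simp]: "u \<in> N \<Longrightarrow> v \<in> N \<Longrightarrow> u \<otimes> v \<in> N"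
  by (rule subgroup.m_closed[OF N_subgroup])

lemma N_inv_closed [simp]: "u \<in> N \<Longrightarrow> inv u \<in> N"
  by (rule subgroup.m_inv_closed[OF N_subgroup])

lemma N_lcomm: "u \<in> N \<Longrightarrow> v \<in> N \<Longrightarrow> r \<in> carrier G \<Longrightarrow> u \<otimes> (v \<otimes> r) = v \<otimes> (u \<otimes> r)"
  by (simp add: abelian m_assoc[symmetric])

lemmas N_ac = abelian N_lcomm

lemma commutator_N [simp]:
  assumes u: "u \<in> N" and g: "g \<in> carrier G"
  shows "\<lbrace>u, g\<rbrace> \<in> N"
proof -
  have "inv g \<otimes> u \<otimes> g \<in> N"
    using normal u g by (metis inv_closed inv_inv normal_inv_iff)
  then show ?thesis
    using u g by (simp add: commutator_def m_assoc)
qed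

lemma commutator_mult_left_N:
  assumes u: "u \<in> N" and v: "v \<in> N" and g: "g \<in> carrier G"
  shows "\<lbrace>u \<otimes> v, g\<rbrace> = \<lbrace>u, g\<rbrace> \<otimes> \<lbrace>v, g\<rbrace>"
  using commutator_mult_left[of u v g] abelian[of "inv v" "\<lbrace>u, g\<rbrace>"] u v g
  by (simp add: m_assoc)

lemma commutator_inv_left_N:
  assumes u: "u \<in> N" and g: "g \<in> carrier G"
  shows "\<lbrace>inv u, g\<rbrace> = inv \<lbrace>u, g\<rbrace>"
  using commutator_mult_left_N[of "inv u" u g] u g by (simp add: inv_equality)

lemma engel_mult_expand:
  assumes u: "u \<in> N" and g: "g \<in> carrier G" and h: "h \<in> carrier G"
  shows "\<lbrace>\<lbrace>u, g \<otimes> h\<rbrace>, g \<otimes> h\<rbrace> =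
    (\<lbrace>\<lbrace>u, g\<rbrace>, h\<rbrace> \<otimes> \<lbrace>\<lbrace>u, h\<rbrace>, g\<rbrace> \<otimes> \<lbrace>\<lbrace>\<lbrace>u, g\<rbrace>, h\<rbrace>, g\<rbrace>) \<otimes>
    (\<lbrace>\<lbrace>\<lbrace>u, h\<rbrace>, g\<rbrace>, h\<rbrace> \<otimes> \<lbrace>\<lbrace>\<lbrace>\<lbrace>u, g\<rbrace>, h\<rbrace>, g\<rbrace>, h\<rbrace>)"
  using u g h by (simp add: commutator_mult_right commutator_mult_left_N m_assoc)

lemma engel_linearized:
  assumes u: "u \<in> N" and g: "g \<in> carrier G" and h: "h \<in> carrier G"
  shows "\<lbrace>\<lbrace>u, g\<rbrace>, h\<rbrace> \<otimes> \<lbrace>\<lbrace>u, h\<rbrace>, g\<rbrace> \<otimes> \<lbrace>\<lbrace>\<lbrace>u, g\<rbrace>, h\<rbrace>, g\<rbrace> = \<one>"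
    (is "?p = \<one>")
proof -
  define q where "q = \<lbrace>\<lbrace>\<lbrace>u, h\<rbrace>, g\<rbrace>, h\<rbrace> \<otimes> \<lbrace>\<lbrace>\<lbrace>\<lbrace>u, g\<rbrace>, h\<rbrace>, g\<rbrace>, h\<rbrace>"
  have p: "?p \<in> N" and q: "q \<in> N"
    using u g h by (simp_all add: q_def)
  have "?p \<otimes> q = \<one>"
    using engel_mult_expand[OF u g h] u g h by (simp add: q_def)
  \<comment> \<open>replacing h by its inverse inverts exactly the factors that are odd in h\<close>
  moreover have "inv ?p \<otimes> q = \<one>"
    using engel_mult_expand[of u g "inv h"] u g h
    by (simp add: q_def commutator_inv_right commutator_inv_left_N inv_mult_group m_assoc N_ac)
  ultimately have "?p \<otimes> q = inv ?p \<otimes> q"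
    by simp
  then have "inv ?p = ?p"
    using p q right_cancel[of q ?p "inv ?p"] by simp
  then show ?thesis
    using p inv_eq_self_imp_eq_one by simp
qed

lemma commutator_sandwich_eq_one:
  assumes u: "u \<in> N" and g: "g \<in> carrier G" and h: "h \<in> carrier G"
  shows "\<lbrace>\<lbrace>\<lbrace>u, g\<rbrace>, h\<rbrace>, g\<rbrace> = \<one>"
  using engel_linearized[of "\<lbrace>u, g\<rbrace>" g h] u g h by simp

lemma commutator_swap:
  assumes u: "u \<in> N" and g: "g \<in> carrier G" and h: "h \<in> carrier G"
  shows "\<lbrace>\<lbrace>u, h\<rbrace>, g\<rbrace> = inv \<lbrace>\<lbrace>u, g\<rbrace>, h\<rbrace>"
proof -
  have "\<lbrace>\<lbrace>u, g\<rbrace>, h\<rbrace> \<otimes> \<lbrace>\<lbrace>u, h\<rbrace>, g\<rbrace> = \<one>"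
    using engel_linearized[OF u g h] u g h by (simp add: commutator_sandwich_eq_one)
  then have "\<lbrace>\<lbrace>u, h\<rbrace>, g\<rbrace> \<otimes> \<lbrace>\<lbrace>u, g\<rbrace>, h\<rbrace> = \<one>"
    using u g h by (simp add: inv_comm)
  then show ?thesis
    using u g h by (simp add: inv_equality)
qed

lemma inv_mult_N: "u \<in> N \<Longrightarrow> v \<in> N \<Longrightarrow> inv (u \<otimes> v) = inv u \<otimes> inv v"
  by (simp add: inv_mult_group abelian)

lemma commutator3_eq_one_N:
  assumes u: "u \<in> N" and g: "g \<in> carrier G" and h: "h \<in> carrier G" and k: "k \<in> carrier G"
  shows "\<lbrace>\<lbrace>\<lbrace>u, g\<rbrace>, h\<rbrace>, k\<rbrace> = \<one>"
proof -
  define x where "x = \<lbrace>\<lbrace>\<lbrace>u, g\<rbrace>, h\<rbrace>, k\<rbrace>"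
  define y where "y = \<lbrace>\<lbrace>\<lbrace>u, h\<rbrace>, k\<rbrace>, g\<rbrace>"
  define a where "a = inv \<lbrace>\<lbrace>u, g\<rbrace>, k\<rbrace> \<otimes> inv \<lbrace>\<lbrace>u, g\<rbrace>, h\<rbrace>"
  have N: "x \<in> N" "y \<in> N" "a \<in> N"
    using u g h k by (simp_all add: x_def y_def a_def)
  \<comment> \<open>antisymmetry at h \<otimes> k gives y = inv x; two further swaps give y = x\<close>
  have "a \<otimes> y = \<lbrace>\<lbrace>u, h \<otimes> k\<rbrace>, g\<rbrace>"
    using u g h k
    by (simp add: a_def y_def commutator_mult_right commutator_mult_left_N
        commutator_swap[of u g k] commutator_swap[of u g h] m_assoc)
  also have "\<dots> = inv \<lbrace>\<lbrace>u, g\<rbrace>, h \<otimes> k\<rbrace>"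
    using u g h k by (simp add: commutator_swap[of u g "h \<otimes> k"])
  also have "\<dots> = a \<otimes> inv x"
    using u g h k by (simp add: a_def x_def commutator_mult_right inv_mult_N)
  finally have y_eq: "y = inv x"
    using N by simp
  have "x = inv \<lbrace>\<lbrace>\<lbrace>u, h\<rbrace>, g\<rbrace>, k\<rbrace>"
    using u g h k by (simp add: x_def commutator_swap[of u h g] commutator_inv_left_N)
  also have "\<dots> = y"
    using u g h k by (simp add: y_def commutator_swap[of "\<lbrace>u, h\<rbrace>" k g])
  finally have "inv x = x"
    using y_eq by simp
  then show ?thesis
    using N by (simp add: x_def inv_eq_self_imp_eq_one)
qed

end

context exp3_group
begin

lemma exp3_abelian_normal_conjugates:
  assumes x: "x \<in> carrier G"
  shows "exp3_abelian_normal G (generate G (conjugates G x))"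
proof -
  have sub: "conjugates G x \<subseteq> carrier G"
    using x by (auto simp: conjugates_def)
  show ?thesis
    by (intro exp3_abelian_normal.intro exp3_abelian_normal_axioms.intro exp3_group_axioms
        generate_conjugates_normal[OF x] generate_abelian[OF sub conjugates_commute[OF x]])
qed

lemma commutator3_eq_one:
  assumes x: "x \<in> carrier G" and g: "g \<in> carrier G" and h: "h \<in> carrier G"
    and k: "k \<in> carrier G"
  shows "\<lbrace>\<lbrace>\<lbrace>x, g\<rbrace>, h\<rbrace>, k\<rbrace> = \<one>"
proof -
  interpret exp3_abelian_normal G "generate G (conjugates G x)"
    using x by (rule exp3_abelian_normal_conjugates)
  have "x \<in> generate G (conjugates G x)"
    using x by (intro generate.incl) (force simp: conjugates_def)
  then show ?thesis
    using g h k by (rule commutator3_eq_one_N)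
qed

end

context group
begin

lemma exp3_group_subgroup:
  assumes "subgroup H G" "exponent3 G H"
  shows "exp3_group (G\<lparr>carrier := H\<rparr>)"
proof (intro exp3_group.intro exp3_group_axioms.intro)
  show "group (G\<lparr>carrier := H\<rparr>)"
    using assms(1) by (rule subgroup.subgroup_is_group) (rule is_group)
  show "exponent3 (G\<lparr>carrier := H\<rparr>) (carrier (G\<lparr>carrier := H\<rparr>))"
    using assms(2) by (simp add: exponent3_def nat_pow_consistent[symmetric])
qed

lemma subgroup_exp3_cube:
  "subgroup H G \<Longrightarrow> exponent3 G H \<Longrightarrow> x \<in> H \<Longrightarrow> x \<otimes> x \<otimes> x = \<one>"
  by (simp add: exponent3_def numeral_3_eq_3 subgroup.mem_carrier)

lemma subgroup_exp3_engel:
  assumes "subgroup H G" "exponent3 G H" "x \<in> H" "y \<in> H"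
  shows "\<lbrace>\<lbrace>x, y\<rbrace>, y\<rbrace> = \<one>"
proof -
  interpret H: exp3_group "G\<lparr>carrier := H\<rparr>"
    using assms(1,2) by (rule exp3_group_subgroup)
  show ?thesis
    using H.engel[of x y] assms(1,3,4)
    by (simp add: commutator_subgroup subgroup_commutator_closed)
qed

lemma subgroup_exp3_commutator3:
  assumes "subgroup H G" "exponent3 G H" "x \<in> H" "y \<in> H" "z \<in> H" "w \<in> H"
  shows "\<lbrace>\<lbrace>\<lbrace>x, y\<rbrace>, z\<rbrace>, w\<rbrace> = \<one>"
proof -
  interpret H: exp3_group "G\<lparr>carrier := H\<rparr>"
    using assms(1,2) by (rule exp3_group_subgroup)
  show ?thesis
    using H.commutator3_eq_one[of x y z w] assms(1,3-6)
    by (simp add: commutator_subgroup subgroup_commutator_closed)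
qed

end

section \<open>The first two terms of the upper central series\<close>

definition center :: "('a, 'b) monoid_scheme \<Rightarrow> 'a set"
  where "center G = {z \<in> carrier G. \<forall>g \<in> carrier G. z \<otimes>\<^bsub>G\<^esub> g = g \<otimes>\<^bsub>G\<^esub> z}"

definition second_center :: "('a, 'b) monoid_scheme \<Rightarrow> 'a set"
  where "second_center G = {u \<in> carrier G. \<forall>g \<in> carrier G. \<lbrace>u, g\<rbrace>\<^bsub>G\<^esub> \<in> center G}"

context group
begin

lemma center_carrier [simp]: "z \<in> center G \<Longrightarrow> z \<in> carrier G"
  unfolding center_def by blast

lemma center_commute: "z \<in> center G \<Longrightarrow> g \<in> carrier G \<Longrightarrow> z \<otimes> g = g \<otimes> z"
  unfolding center_def by blast

lemma center_lcommute:
  "z \<in> center G \<Longrightarrow> g \<in> carrier G \<Longrightarrow> r \<in> carrier G \<Longrightarrow> z \<otimes> (g \<otimes> r) = g \<otimes> (z \<otimes> r)"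
  by (simp add: center_commute[of z g] m_assoc[symmetric])

lemmas center_ac = center_commute center_lcommute

lemma one_center [simp]: "\<one> \<in> center G"
  unfolding center_def by simp

lemma commutator_center_left [simp]: "z \<in> center G \<Longrightarrow> g \<in> carrier G \<Longrightarrow> \<lbrace>z, g\<rbrace> = \<one>"
  by (simp add: center_commute commutator_eq_one_iff)

lemma centerI:
  assumes z: "z \<in> carrier G" and comm: "\<And>g. g \<in> carrier G \<Longrightarrow> \<lbrace>z, g\<rbrace> = \<one>"
  shows "z \<in> center G"
  using z comm commutator_eq_one_iff[OF z] unfolding center_def by blast

lemma conj_center: "z \<in> center G \<Longrightarrow> g \<in> carrier G \<Longrightarrow> inv g \<otimes> z \<otimes> g = z"
  by (simp add: center_commute[of z g] m_assoc)

lemma commutator_mult_left_center: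
  assumes "u \<in> carrier G" "v \<in> carrier G" "g \<in> carrier G" "\<lbrace>u, g\<rbrace> \<in> center G"
  shows "\<lbrace>u \<otimes> v, g\<rbrace> = \<lbrace>u, g\<rbrace> \<otimes> \<lbrace>v, g\<rbrace>"
  using assms by (simp add: commutator_mult_left conj_center)

lemma center_mult [simp]:
  assumes "z \<in> center G" "z' \<in> center G"
  shows "z \<otimes> z' \<in> center G"
  using assms by (intro centerI) (simp_all add: commutator_mult_left_center)

lemma commutator_mult_right_center:
  assumes "w \<in> carrier G" "h \<in> carrier G" "s \<in> carrier G" "\<lbrace>w, h\<rbrace> \<in> center G"
  shows "\<lbrace>w, h \<otimes> s\<rbrace> = \<lbrace>w, s\<rbrace> \<otimes> \<lbrace>w, h\<rbrace>"
  using assms commutator_mult_right[of w h s] by simp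

lemma second_center_carrier [simp]: "u \<in> second_center G \<Longrightarrow> u \<in> carrier G"
  unfolding second_center_def by blast

lemma commutator_second_center:
  "u \<in> second_center G \<Longrightarrow> g \<in> carrier G \<Longrightarrow> \<lbrace>u, g\<rbrace> \<in> center G"
  unfolding second_center_def by blast

lemma second_centerI:
  "u \<in> carrier G \<Longrightarrow> (\<And>g. g \<in> carrier G \<Longrightarrow> \<lbrace>u, g\<rbrace> \<in> center G) \<Longrightarrow> u \<in> second_center G"
  unfolding second_center_def by blast

lemma center_in_second_center [simp]: "z \<in> center G \<Longrightarrow> z \<in> second_center G"
  by (auto intro: second_centerI)

lemma second_center_mult [simp]:
  assumes "u \<in> second_center G" "v \<in> second_center G"
  shows "u \<otimes> v \<in> second_center G"
proof -
  have "\<lbrace>u \<otimes> v, g\<rbrace> \<in> center G" if "g \<in> carrier G" for g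
    using assms that by (simp add: commutator_second_center commutator_mult_left_center)
  then show ?thesis
    using assms by (intro second_centerI) simp_all
qed

end

section \<open>From subgroups with four generators to the whole group\<close>

locale exp3_on_small_subsets = group G for G (structure) +
  fixes S :: "'a set"
  assumes S_carrier: "S \<subseteq> carrier G"
    and generate_S: "generate G S = carrier G"
    and small_exp3: "\<And>T. T \<subseteq> S \<Longrightarrow> card T \<le> 4 \<Longrightarrow> exponent3 G (generate G T)"
begin

lemma S_elem_carrier [simp]: "s \<in> S \<Longrightarrow> s \<in> carrier G"
  using S_carrier by blast

lemma small_subset_generate:
  assumes "T \<subseteq> S" "card T \<le> 4"
  shows "subgroup (generate G T) G" "exponent3 G (generate G T)"
  using assms S_carrier by (auto intro: generate_is_subgroup small_exp3)

lemma generator_cube: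
  assumes "s \<in> S"
  shows "s \<otimes> s \<otimes> s = \<one>"
proof -
  have T: "{s} \<subseteq> S" "card {s} \<le> 4"
    using assms by auto
  show ?thesis
    by (rule subgroup_exp3_cube[OF small_subset_generate[OF T]]) (simp add: generate.incl)
qed

lemma generators_engel:
  assumes "a \<in> S" "b \<in> S" "c \<in> S" "y \<in> generate G {b, c}"
  shows "\<lbrace>\<lbrace>a, y\<rbrace>, y\<rbrace> = \<one>"
proof -
  have T: "{a, b, c} \<subseteq> S" "card {a, b, c} \<le> 4"
    using assms by (auto simp: card_insert_if)
  have "y \<in> generate G {a, b, c}"
    using assms(4) mono_generate[of "{b, c}" "{a, b, c}"] by auto
  then show ?thesis
    by (intro subgroup_exp3_engel[OF small_subset_generate[OF T]]) (simp_all add: generate.incl)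
qed

lemma generators_commutator3:
  assumes "a \<in> S" "b \<in> S" "c \<in> S" "d \<in> S"
  shows "\<lbrace>\<lbrace>\<lbrace>a, b\<rbrace>, c\<rbrace>, d\<rbrace> = \<one>"
proof -
  have T: "{a, b, c, d} \<subseteq> S" "card {a, b, c, d} \<le> 4"
    using assms by (auto simp: card_insert_if)
  show ?thesis
    by (intro subgroup_exp3_commutator3[OF small_subset_generate[OF T]]) (simp_all add: generate.incl)
qed

lemma generators_commutator3_cube:
  assumes "a \<in> S" "b \<in> S" "c \<in> S"
  shows "\<lbrace>\<lbrace>a, b\<rbrace>, c\<rbrace> [^] (3::nat) = \<one>"
proof -
  have T: "{a, b, c} \<subseteq> S" "card {a, b, c} \<le> 4"
    using assms by (auto simp: card_insert_if)
  have "\<lbrace>\<lbrace>a, b\<rbrace>, c\<rbrace> \<in> generate G {a, b, c}"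
    using small_subset_generate(1)[OF T] by (auto intro: subgroup_commutator_closed generate.incl)
  then show ?thesis
    using small_subset_generate(2)[OF T] by (simp add: exponent3_def)
qed

lemma word_induct [consumes 1, case_names one step]:
  assumes g: "g \<in> carrier G" and one: "P \<one>"
    and step: "\<And>h s. h \<in> carrier G \<Longrightarrow> P h \<Longrightarrow> s \<in> S \<Longrightarrow> P (h \<otimes> s)"
  shows "P g"
proof -
  \<comment> \<open>since inv s = s \<otimes> s, products of generators without inverses exhaust G\<close>
  have "\<forall>h \<in> carrier G. P h \<longrightarrow> P (h \<otimes> g)" if "g \<in> generate G S" for g
    using that
  proof (induction rule: generate.induct)
    case one
    then show ?case by simp
  next
    case (incl s)
    then show ?case using step by blast
  next
    case (inv s)
    have "inv s = s \<otimes> s"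
      using generator_cube[OF inv] inv by (intro inv_equality) auto
    then show ?case
      using inv step by (simp add: m_assoc[symmetric])
  next
    case (eng g1 g2)
    then have "g1 \<in> carrier G" "g2 \<in> carrier G"
      using generate_in_carrier[OF S_carrier] by auto
    then show ?case
      using eng.IH by (simp add: m_assoc[symmetric])
  qed
  then show ?thesis
    using g one generate_S by (metis l_one one_closed)
qed

lemma centerI_generators:
  assumes u: "u \<in> carrier G" and comm: "\<And>s. s \<in> S \<Longrightarrow> \<lbrace>u, s\<rbrace> = \<one>"
  shows "u \<in> center G"
proof (rule centerI[OF u])
  fix g assume "g \<in> carrier G"
  then have "u \<otimes> g = g \<otimes> u"
    using generate_commute[OF u S_carrier] comm commutator_eq_one_iff[OF u] generate_S by auto
  then show "\<lbrace>u, g\<rbrace> = \<one>"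
    using u \<open>g \<in> carrier G\<close> by (simp add: commutator_eq_one_iff)
qed

lemma second_centerI_generators:
  assumes w: "w \<in> carrier G" and comm: "\<And>s. s \<in> S \<Longrightarrow> \<lbrace>w, s\<rbrace> \<in> center G"
  shows "w \<in> second_center G"
proof (rule second_centerI[OF w])
  fix g assume "g \<in> carrier G"
  then show "\<lbrace>w, g\<rbrace> \<in> center G"
  proof (induction rule: word_induct)
    case one
    then show ?case using w by simp
  next
    case (step h s)
    then show ?case
      using w comm by (simp add: commutator_mult_right_center)
  qed
qed

lemma commutator_generators_second_center:
  assumes "a \<in> S" "b \<in> S"
  shows "\<lbrace>a, b\<rbrace> \<in> second_center G"
  using assms
  by (intro second_centerI_generators centerI_generators) (simp_all add: generators_commutator3)

lemma commutator_generator_second_center: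
  assumes a: "a \<in> S" and g: "g \<in> carrier G"
  shows "\<lbrace>a, g\<rbrace> \<in> second_center G"
  using g
proof (induction rule: word_induct)
  case one
  then show ?case using a by simp
next
  case (step h s)
  then have "\<lbrace>\<lbrace>a, h\<rbrace>, s\<rbrace> \<in> second_center G"
    using a commutator_second_center by simp
  then show ?case
    using step a by (simp add: commutator_mult_right commutator_generators_second_center)
qed

lemma commutator_in_second_center [simp]:
  assumes x: "x \<in> carrier G" and g: "g \<in> carrier G"
  shows "\<lbrace>x, g\<rbrace> \<in> second_center G"
proof -
  have "\<forall>g \<in> carrier G. \<lbrace>x, g\<rbrace> \<in> second_center G"
    using x
  proof (induction rule: word_induct)
    case one
    then show ?case by simp
  next
    case (step h s)
    have "\<lbrace>h \<otimes> s, g\<rbrace> \<in> second_center G" if g: "g \<in> carrier G" for g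
    proof -
      have "\<lbrace>\<lbrace>h, g\<rbrace>, s\<rbrace> \<in> second_center G"
        using step g commutator_second_center by simp
      then show ?thesis
        using step g
        by (simp add: commutator_mult_left conj_eq_mult_commutator commutator_generator_second_center)
    qed
    then show ?case by blast
  qed
  then show ?thesis using g by blast
qed

lemma commutator3_in_center [simp]:
  "x \<in> carrier G \<Longrightarrow> y \<in> carrier G \<Longrightarrow> z \<in> carrier G \<Longrightarrow> \<lbrace>\<lbrace>x, y\<rbrace>, z\<rbrace> \<in> center G"
  by (simp add: commutator_second_center)

lemma commutator3_mult_left:
  assumes "x \<in> carrier G" "x' \<in> carrier G" "y \<in> carrier G" "z \<in> carrier G"
  shows "\<lbrace>\<lbrace>x \<otimes> x', y\<rbrace>, z\<rbrace> = \<lbrace>\<lbrace>x, y\<rbrace>, z\<rbrace> \<otimes> \<lbrace>\<lbrace>x', y\<rbrace>, z\<rbrace>"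
  using assms
  by (simp add: commutator_mult_left conj_eq_mult_commutator commutator_mult_left_center
      commutator_second_center)

lemma commutator3_mult_mid:
  assumes "x \<in> carrier G" "y \<in> carrier G" "y' \<in> carrier G" "z \<in> carrier G"
  shows "\<lbrace>\<lbrace>x, y \<otimes> y'\<rbrace>, z\<rbrace> = \<lbrace>\<lbrace>x, y'\<rbrace>, z\<rbrace> \<otimes> \<lbrace>\<lbrace>x, y\<rbrace>, z\<rbrace>"
  using assms
  by (simp add: commutator_mult_right commutator_mult_left_center commutator_second_center)

lemma commutator3_mult_right:
  assumes "x \<in> carrier G" "y \<in> carrier G" "z \<in> carrier G" "z' \<in> carrier G"
  shows "\<lbrace>\<lbrace>x, y\<rbrace>, z \<otimes> z'\<rbrace> = \<lbrace>\<lbrace>x, y\<rbrace>, z'\<rbrace> \<otimes> \<lbrace>\<lbrace>x, y\<rbrace>, z\<rbrace>"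
  using assms by (simp add: commutator_mult_right_center)

lemma mult_trivial_on_generators:
  assumes g: "g \<in> carrier G"
    and one: "\<phi> \<one> = \<one>"
    and mult: "\<And>h s. h \<in> carrier G \<Longrightarrow> s \<in> S \<Longrightarrow> \<phi> (h \<otimes> s) = \<phi> h \<otimes> \<phi> s"
    and gens: "\<And>s. s \<in> S \<Longrightarrow> \<phi> s = \<one>"
  shows "\<phi> g = \<one>"
  using g by (induction rule: word_induct) (simp_all add: one mult gens)

lemma trilinear_trivial_on_generators:
  fixes f :: "'a \<Rightarrow> 'a \<Rightarrow> 'a \<Rightarrow> 'a"
  assumes xyz: "x \<in> carrier G" "y \<in> carrier G" "z \<in> carrier G"
    and closed: "\<And>x y z. x \<in> carrier G \<Longrightarrow> y \<in> carrier G \<Longrightarrow> z \<in> carrier G \<Longrightarrow>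
      f x y z \<in> carrier G"
    and mult1: "\<And>x x' y z. x \<in> carrier G \<Longrightarrow> x' \<in> carrier G \<Longrightarrow> y \<in> carrier G \<Longrightarrow>
      z \<in> carrier G \<Longrightarrow> f (x \<otimes> x') y z = f x y z \<otimes> f x' y z"
    and mult2: "\<And>x y y' z. x \<in> carrier G \<Longrightarrow> y \<in> carrier G \<Longrightarrow> y' \<in> carrier G \<Longrightarrow>
      z \<in> carrier G \<Longrightarrow> f x (y \<otimes> y') z = f x y z \<otimes> f x y' z"
    and mult3: "\<And>x y z z'. x \<in> carrier G \<Longrightarrow> y \<in> carrier G \<Longrightarrow> z \<in> carrier G \<Longrightarrow>
      z' \<in> carrier G \<Longrightarrow> f x y (z \<otimes> z') = f x y z \<otimes> f x y z'"
    and gens: "\<And>a b c. a \<in> S \<Longrightarrow> b \<in> S \<Longrightarrow> c \<in> S \<Longrightarrow> f a b c = \<one>"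
  shows "f x y z = \<one>"
proof -
  have idem: "a = \<one>" if "a \<in> carrier G" "a \<otimes> a = a" for a
    using that by (metis l_one right_cancel one_closed)
  have f1: "f x b c = \<one>" if "x \<in> carrier G" "b \<in> S" "c \<in> S" for x b c
    by (rule mult_trivial_on_generators[where \<phi> = "\<lambda>x. f x b c", OF that(1)])
      (use that idem closed mult1[of \<one> \<one> b c] mult1 gens in simp_all)
  have f2: "f x y c = \<one>" if "x \<in> carrier G" "y \<in> carrier G" "c \<in> S" for x y c
    by (rule mult_trivial_on_generators[where \<phi> = "\<lambda>y. f x y c", OF that(2)])
      (use that idem closed mult2[of x \<one> \<one> c] mult2 f1 in simp_all)
  show ?thesis
    by (rule mult_trivial_on_generators[where \<phi> = "f x y", OF xyz(3)])
      (use xyz idem closed mult3[of x y \<one> \<one>] mult3 f2 in simp_all)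
qed

lemma commutator3_alternating:
  assumes "x \<in> carrier G" "y \<in> carrier G" "z \<in> carrier G"
  shows "\<lbrace>\<lbrace>x, y\<rbrace>, z\<rbrace> \<otimes> \<lbrace>\<lbrace>x, z\<rbrace>, y\<rbrace> = \<one>"
  using assms
proof (rule trilinear_trivial_on_generators[where f = "\<lambda>x y z. \<lbrace>\<lbrace>x, y\<rbrace>, z\<rbrace> \<otimes> \<lbrace>\<lbrace>x, z\<rbrace>, y\<rbrace>"])
  fix a b c assume abc: "a \<in> S" "b \<in> S" "c \<in> S"
  have "\<one> = \<lbrace>\<lbrace>a, b \<otimes> c\<rbrace>, b \<otimes> c\<rbrace>"
    using abc by (simp add: generators_engel generate.incl subgroup.m_closed generate_is_subgroup)
  also have "\<dots> = \<lbrace>\<lbrace>a, b\<rbrace>, c\<rbrace> \<otimes> \<lbrace>\<lbrace>a, c\<rbrace>, b\<rbrace>"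
    using abc
    by (simp add: commutator3_mult_mid commutator3_mult_right generators_engel generate.incl
        center_ac m_assoc)
  finally show "\<lbrace>\<lbrace>a, b\<rbrace>, c\<rbrace> \<otimes> \<lbrace>\<lbrace>a, c\<rbrace>, b\<rbrace> = \<one>" ..
qed (simp_all add: commutator3_mult_left commutator3_mult_mid commutator3_mult_right center_ac m_assoc)

lemma commutator3_cube:
  assumes "x \<in> carrier G" "y \<in> carrier G" "z \<in> carrier G"
  shows "\<lbrace>\<lbrace>x, y\<rbrace>, z\<rbrace> [^] (3::nat) = \<one>"
  using assms
proof (rule trilinear_trivial_on_generators[where f = "\<lambda>x y z. \<lbrace>\<lbrace>x, y\<rbrace>, z\<rbrace> [^] (3::nat)"])
qed (simp_all add: commutator3_mult_left commutator3_mult_mid commutator3_mult_right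
    pow_mult_distrib center_commute generators_commutator3_cube)

lemma two_engel:
  assumes x: "x \<in> carrier G" and y: "y \<in> carrier G"
  shows "\<lbrace>\<lbrace>x, y\<rbrace>, y\<rbrace> = \<one>"
proof -
  have "\<lbrace>\<lbrace>x, y\<rbrace>, y\<rbrace> \<otimes> \<lbrace>\<lbrace>x, y\<rbrace>, y\<rbrace> = \<one>"
    using commutator3_alternating[OF x y y] .
  then show ?thesis
    using commutator3_cube[OF x y y] x y by (simp add: numeral_3_eq_3)
qed

lemma cube_eq_one: "g \<in> carrier G \<Longrightarrow> g \<otimes> g \<otimes> g = \<one>"
proof (induction rule: word_induct)
  case one
  then show ?case by simp
next
  case (step h s)
  have "\<lbrace>\<lbrace>h, s\<rbrace>, h\<rbrace> = \<one>"
    using commutator3_alternating[of h s h] step by simp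
  then show ?case
    using step two_engel generator_cube by (intro cube_mult_eq_one) simp_all
qed

end

theorem lemma6p5:
  fixes G (structure) and S :: "'a set"
  assumes "group G"
    and "S \<subseteq> carrier G"
    and "finite S"
    and "generate G S = carrier G"
    and "\<And>T. T \<subseteq> S \<Longrightarrow> card T \<le> 4 \<Longrightarrow> exponent3 G (generate G T)"
  shows "exponent3 G (carrier G)"
proof -
  interpret exp3_on_small_subsets G S
    using assms(1,2,4,5) by (intro exp3_on_small_subsets.intro exp3_on_small_subsets_axioms.intro)
  show ?thesis
    using cube_eq_one by (simp add: exponent3_def numeral_3_eq_3)
qed

end
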